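(* Let $k,\ell$ be non-negative integers with $\ell<2k$. Let $D$ be an orientation of a $(k,\ell)$-sparse loopless multigraph $H=(V,F)$ in which every vertex has indegree at most $k$, and let $u,v\in V$ be distinct with $\varrho_D(u)+\varrho_D(v)\le 2k-\ell$. A set $X\subseteq V$ containing both $u$ and $v$ is a $(k,\ell)$-block of $H$ if and only if $\varrho_D(u)+\varrho_D(v)=2k-\ell$, $\varrho_D(X)=0$, and every vertex in $X\setminus\{u,v\}$ has indegree exactly $k$ in $D$.
   Context: For $X\subseteq V$, $i_H(X)$ is the number of edges of $H$ with both endpoints in $X$. $H$ is $(k,\ell)$-sparse if $i_H(X)\le\max\{k|X|-\ell,0\}$ for every $X\subseteq V$. A $(k,\ell)$-block of $H$ is a set $X\subseteq V$ with $i_H(X)=\max\{k|X|-\ell,0\}$. For a vertex $w$, $\varrho_D(w)$ is its indegree in $D$; for a set $X\subseteq V$, $\varrho_D(X)$ is the number of arcs of $D$ with tail in $V\setminus X$ and head in $X$. *)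

theory Defs
  imports Main "HOL-Library.Multiset"
begin

definition loopless_multigraph :: "'a set \<Rightarrow> 'a set multiset \<Rightarrow> bool" where
  "loopless_multigraph V F \<longleftrightarrow> finite V \<and> (\<forall>e\<in>#F. e \<subseteq> V \<and> card e = 2)"

definition is_orientation :: "('a \<times> 'a) multiset \<Rightarrow> 'a set multiset \<Rightarrow> bool" where
  "is_orientation D F \<longleftrightarrow> image_mset (\<lambda>(x,y). {x,y}) D = F"

definition i_H :: "'a set multiset \<Rightarrow> 'a set \<Rightarrow> nat" where
  "i_H F X = size (filter_mset (\<lambda>e. e \<subseteq> X) F)"

definition sparse :: "nat \<Rightarrow> nat \<Rightarrow> 'a set \<Rightarrow> 'a set multiset \<Rightarrow> bool" where
  "sparse k l V F \<longleftrightarrow>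
     (\<forall>X\<subseteq>V. int (i_H F X) \<le> max (int k * int (card X) - int l) 0)"

definition block :: "nat \<Rightarrow> nat \<Rightarrow> 'a set \<Rightarrow> 'a set multiset \<Rightarrow> 'a set \<Rightarrow> bool" where
  "block k l V F X \<longleftrightarrow>
     X \<subseteq> V \<and> int (i_H F X) = max (int k * int (card X) - int l) 0"

definition indeg :: "('a \<times> 'a) multiset \<Rightarrow> 'a \<Rightarrow> nat" where
  "indeg D w = size (filter_mset (\<lambda>(x,y). y = w) D)"

definition indeg_set :: "('a \<times> 'a) multiset \<Rightarrow> 'a set \<Rightarrow> nat" where
  "indeg_set D X = size (filter_mset (\<lambda>(x,y). x \<notin> X \<and> y \<in> X) D)"

end

theory Submission
  imports Defs
begin

text \<open>Every arc of D with head in X either has its tail in X, and is then an edge of H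
inside X, or enters X. Hence the indegrees over X sum to i(X) + \<rho>(X). Since each indegree
is at most k, this sum is at most \<rho>(u) + \<rho>(v) + k(|X| - 2) \<le> k|X| - \<ell>, while X is a block
exactly when i(X) = k|X| - \<ell>; so X is a block iff all three slacks vanish.\<close>

lemma sum_indeg_eq_size_heads_in:
  assumes "finite X"
  shows "(\<Sum>w\<in>X. indeg D w) = size {#a \<in># D. snd a \<in> X#}"
  using assms
proof (induction X rule: finite_induct)
  case empty
  then show ?case by simp
next
  case (insert w X)
  have "{#a \<in># D. snd a \<in> insert w X#} = {#a \<in># D. snd a = w#} + {#a \<in># D. snd a \<in> X#}"
    using insert.hyps(2) by (induction D) auto
  moreover have "size {#a \<in># D. snd a = w#} = indeg D w"
    unfolding indeg_def by (metis (mono_tags) case_prod_beta)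
  ultimately show ?case
    using insert by simp
qed

lemma i_H_orientation:
  assumes "is_orientation D F"
  shows "i_H F X = size {#(x, y) \<in># D. x \<in> X \<and> y \<in> X#}"
proof -
  have "{#e \<in># image_mset (\<lambda>(x, y). {x, y}) D. e \<subseteq> X#}
      = image_mset (\<lambda>(x, y). {x, y}) {#(x, y) \<in># D. x \<in> X \<and> y \<in> X#}"
    by (induction D) auto
  then show ?thesis
    using assms unfolding i_H_def is_orientation_def by simp
qed

lemma sum_indeg_eq_i_H_add_indeg_set:
  assumes "is_orientation D F" and "finite X"
  shows "(\<Sum>w\<in>X. indeg D w) = i_H F X + indeg_set D X"
proof -
  let ?heads_in = "{#a \<in># D. snd a \<in> X#}"
  have "?heads_in = {#a \<in># ?heads_in. fst a \<in> X#} + {#a \<in># ?heads_in. fst a \<notin> X#}"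
    by (rule multiset_partition)
  also have "\<dots> = {#(x, y) \<in># D. x \<in> X \<and> y \<in> X#} + {#(x, y) \<in># D. x \<notin> X \<and> y \<in> X#}"
    by (auto simp: filter_filter_mset case_prod_beta intro!: arg_cong2[where f = "(+)"] filter_mset_cong)
  finally show ?thesis
    unfolding sum_indeg_eq_size_heads_in[OF assms(2)] i_H_orientation[OF assms(1)] indeg_set_def
    by simp
qed

lemma sum_bounded_eq_iff:
  fixes f :: "'b \<Rightarrow> nat"
  assumes "finite A" and "\<And>w. w \<in> A \<Longrightarrow> f w \<le> k"
  shows "sum f A = card A * k \<longleftrightarrow> (\<forall>w\<in>A. f w = k)"
  using sum_mono_inv[of f A "\<lambda>_. k"] assms by auto

lemma block_iff_i_H:
  assumes "X \<subseteq> V" and "l < k * card X"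
  shows "block k l V F X \<longleftrightarrow> i_H F X + l = k * card X"
  using assms unfolding block_def by (simp flip: of_nat_mult) linarith

theorem lemma3:
  fixes k l :: nat and V :: "'a set" and F :: "'a set multiset"
    and D :: "('a \<times> 'a) multiset" and u v :: 'a and X :: "'a set"
  assumes "l < 2 * k"
    and "loopless_multigraph V F"
    and "sparse k l V F"
    and "is_orientation D F"
    and "\<forall>w\<in>V. indeg D w \<le> k"
    and "u \<in> V" and "v \<in> V" and "u \<noteq> v"
    and "indeg D u + indeg D v + l \<le> 2 * k"
    and "X \<subseteq> V" and "u \<in> X" and "v \<in> X"
  shows "block k l V F X \<longleftrightarrow>
           (indeg D u + indeg D v + l = 2 * k \<and> indeg_set D X = 0 \<and>
            (\<forall>w\<in>X - {u, v}. indeg D w = k))"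
proof -
  let ?R = "X - {u, v}"
  have "finite X"
    using assms(2,10) finite_subset unfolding loopless_multigraph_def by blast
  have X_split: "X = insert u (insert v ?R)"
    using assms(11,12) by auto
  have card_X: "card X = card ?R + 2"
    by (subst X_split) (simp add: \<open>finite X\<close> assms(8))
  have counting: "i_H F X + indeg_set D X = indeg D u + indeg D v + (\<Sum>w\<in>?R. indeg D w)"
    unfolding sum_indeg_eq_i_H_add_indeg_set[OF assms(4) \<open>finite X\<close>, symmetric]
    by (subst X_split) (simp add: \<open>finite X\<close> assms(8))
  have R_bound: "\<And>w. w \<in> ?R \<Longrightarrow> indeg D w \<le> k"
    using assms(5,10) by auto
  then have R_sum_le: "(\<Sum>w\<in>?R. indeg D w) \<le> card ?R * k"
    using sum_mono[of ?R "indeg D" "\<lambda>_. k"] by simp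
  have R_sum_eq_iff: "(\<Sum>w\<in>?R. indeg D w) = card ?R * k \<longleftrightarrow> (\<forall>w\<in>?R. indeg D w = k)"
    using \<open>finite X\<close> R_bound by (intro sum_bounded_eq_iff) auto
  have k_card_X: "k * card X = card ?R * k + 2 * k"
    using card_X by simp
  then have "block k l V F X \<longleftrightarrow> i_H F X + l = k * card X"
    using assms(1,10) by (intro block_iff_i_H) auto
  then show ?thesis
    unfolding R_sum_eq_iff[symmetric] using counting R_sum_le k_card_X assms(9) by linarith
qed

end
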